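(* Let $X\subseteq \mathbb{P}^1\times\mathbb{P}^1\times\mathbb{P}^1$ be a variety of lines such that, for each $h=1,2,3$, $U_h(X)$ resembles a Ferrers diagram. Then $X$ has the $Hyp_6(\star)$-property if and only if for all $a_1,a_2\in[d_1]$, $b_1,b_2\in[d_2]$, $c_1,c_2\in[d_3]$, $$\text{either }\left(\begin{array}{cc}\mu_{a_1b_1c_1} & \mu_{a_1b_2c_1}\\ \mu_{a_2b_1c_1} & \mu_{a_2b_2c_1}\end{array}\right)\neq\left(\begin{array}{cc}3&2\\2&2\end{array}\right)\ \text{or}\ \left(\begin{array}{cc}\mu_{a_1b_1c_2} & \mu_{a_1b_2c_2}\\ \mu_{a_2b_1c_2} & \mu_{a_2b_2c_2}\end{array}\right)\neq\left(\begin{array}{cc}2&2\\2&3\end{array}\right).$$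
   Context: $R=K[x_{1,0},x_{1,1},x_{2,0},x_{2,1},x_{3,0},x_{3,1}]$ ($K$ algebraically closed, characteristic zero) trigraded by $\deg x_{i,j}=\mathbf e_i$, coordinate ring of $\mathbb{P}^1\times\mathbb{P}^1\times\mathbb{P}^1$. A variety of lines is written $X= \bigcup_{(i,j)\in U_3(X)} \mathcal{L}(A_i,B_j)\cup\bigcup_{(i,k)\in U_2(X)} \mathcal{L}(A_i,C_k)\cup \bigcup_{(j,k)\in U_1(X)} \mathcal{L}(B_j,C_k)$, where $\mathcal L(A_1),\ldots,\mathcal L(A_{d_1})$, $\mathcal L(B_1),\ldots,\mathcal L(B_{d_2})$, $\mathcal L(C_1),\ldots,\mathcal L(C_{d_3})$ are the distinct hyperplanes containing some line of $X$, defined by linear forms of degrees $(1,0,0),(0,1,0),(0,0,1)$ respectively, $\mathcal L(F,G)$ is the line defined by $(F,G)$, $U_3(X)\subseteq[d_1]\times[d_2]$, $U_2(X)\subseteq[d_1]\times[d_3]$, $U_1(X)\subseteq[d_2]\times[d_3]$, $[n]=\{1,\dots,n\}$. $U_h(X)$ resembles a Ferrers diagram if after permuting each of its two index sets it becomes a set $U$ with: $(u,v)\in U\Rightarrow (u',v')\in U$ for all $1\le u'\le u$, $1\le v'\le v$. For $P_{ijk}=\mathcal L(A_i)\cap\mathcal L(B_j)\cap\mathcal L(C_k)$, the multiplicity $\mu_{ijk}$ is the number of lines of $X$ passing through $P_{ijk}$ (equivalently the number of the lines $\mathcal L(A_i,B_j),\mathcal L(A_i,C_k),\mathcal L(B_j,C_k)$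 that belong to $X$). $X$ has the $Hyp_6(\star)$-property if for any $6$ hyperplanes $H_1,\ldots,H_6$ (each defined by a linear form of degree some $\mathbf e_i$) such that $\mathcal{L}(H_i,H_j)$ is a line of $X$ for all $j\neq i-1,i,i+1$ (indices modulo $6$), there is $u$ with $\mathcal{L}(H_u,H_{u+1})$ a line of $X$. *)

theory Defs
  imports "HOL-Computational_Algebra.Polynomial"
begin

text \<open>Points of P^1 x P^1 x P^1: a point is given by homogeneous coordinates
  p t = (x_{t,0}, x_{t,1}) for t = 1,2,3, each nonzero (the other indices are set to 0).
  Zero sets of multihomogeneous forms are invariant under rescaling each factor,
  so sets of representatives faithfully represent subvarieties.\<close>

type_synonym 'k pt = "nat \<Rightarrow> 'k \<times> 'k"

definition points :: "'k::field pt set" where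
  "points = {p. (\<forall>t\<in>{1,2,3}. p t \<noteq> (0,0)) \<and> (\<forall>t. t \<notin> {1,2,3} \<longrightarrow> p t = (0,0))}"

text \<open>A linear form of degree e_t: (t, (a,b)) stands for a x_{t,0} + b x_{t,1}, (a,b) nonzero.\<close>

type_synonym 'k lform = "nat \<times> ('k \<times> 'k)"

definition is_lform :: "'k::field lform \<Rightarrow> bool" where
  "is_lform F \<longleftrightarrow> fst F \<in> {1,2,3} \<and> snd F \<noteq> (0,0)"

definition eval_lform :: "'k::field lform \<Rightarrow> 'k pt \<Rightarrow> 'k" where
  "eval_lform F p = fst (snd F) * fst (p (fst F)) + snd (snd F) * snd (p (fst F))"

definition hyp :: "'k::field lform \<Rightarrow> 'k pt set" where
  "hyp F = {p \<in> points. eval_lform F p = 0}"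

definition lin :: "'k::field lform \<Rightarrow> 'k lform \<Rightarrow> 'k pt set" where
  "lin F G = hyp F \<inter> hyp G"

definition formA :: "(nat \<Rightarrow> 'k \<times> 'k) \<Rightarrow> nat \<Rightarrow> 'k lform" where "formA A i = (1, A i)"
definition formB :: "(nat \<Rightarrow> 'k \<times> 'k) \<Rightarrow> nat \<Rightarrow> 'k lform" where "formB B j = (2, B j)"
definition formC :: "(nat \<Rightarrow> 'k \<times> 'k) \<Rightarrow> nat \<Rightarrow> 'k lform" where "formC C k = (3, C k)"

definition variety_of_lines ::
  "(nat \<Rightarrow> 'k::field \<times> 'k) \<Rightarrow> (nat \<Rightarrow> 'k \<times> 'k) \<Rightarrow> (nat \<Rightarrow> 'k \<times> 'k)
   \<Rightarrow> nat \<Rightarrow> nat \<Rightarrow> nat \<Rightarrow> (nat \<times> nat) set \<Rightarrow> (nat \<times> nat) set \<Rightarrow> (nat \<times> nat) set \<Rightarrow> bool" where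
  "variety_of_lines A B C d1 d2 d3 U3 U2 U1 \<longleftrightarrow>
     U3 \<subseteq> {1..d1} \<times> {1..d2} \<and> U2 \<subseteq> {1..d1} \<times> {1..d3} \<and> U1 \<subseteq> {1..d2} \<times> {1..d3} \<and>
     (\<forall>i\<in>{1..d1}. A i \<noteq> (0,0)) \<and> (\<forall>j\<in>{1..d2}. B j \<noteq> (0,0)) \<and> (\<forall>k\<in>{1..d3}. C k \<noteq> (0,0)) \<and>
     \<comment> \<open>the hyperplanes are distinct\<close>
     inj_on (\<lambda>i. hyp (formA A i)) {1..d1} \<and>
     inj_on (\<lambda>j. hyp (formB B j)) {1..d2} \<and>
     inj_on (\<lambda>k. hyp (formC C k)) {1..d3} \<and>
     \<comment> \<open>each of them contains some line of X\<close>
     (\<forall>i\<in>{1..d1}. (\<exists>j. (i,j) \<in> U3) \<or> (\<exists>k. (i,k) \<in> U2)) \<and>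
     (\<forall>j\<in>{1..d2}. (\<exists>i. (i,j) \<in> U3) \<or> (\<exists>k. (j,k) \<in> U1)) \<and>
     (\<forall>k\<in>{1..d3}. (\<exists>i. (i,k) \<in> U2) \<or> (\<exists>j. (j,k) \<in> U1))"

definition lines_of ::
  "(nat \<Rightarrow> 'k::field \<times> 'k) \<Rightarrow> (nat \<Rightarrow> 'k \<times> 'k) \<Rightarrow> (nat \<Rightarrow> 'k \<times> 'k)
   \<Rightarrow> (nat \<times> nat) set \<Rightarrow> (nat \<times> nat) set \<Rightarrow> (nat \<times> nat) set \<Rightarrow> 'k pt set set" where
  "lines_of A B C U3 U2 U1 =
     (\<lambda>(i,j). lin (formA A i) (formB B j)) ` U3 \<union>
     (\<lambda>(i,k). lin (formA A i) (formC C k)) ` U2 \<union>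
     (\<lambda>(j,k). lin (formB B j) (formC C k)) ` U1"

text \<open>L(F,G) is a line of X: F, G have different degrees (so L(F,G) is a line) and it is
  one of the lines of X.\<close>
definition is_line_of ::
  "(nat \<Rightarrow> 'k::field \<times> 'k) \<Rightarrow> (nat \<Rightarrow> 'k \<times> 'k) \<Rightarrow> (nat \<Rightarrow> 'k \<times> 'k)
   \<Rightarrow> (nat \<times> nat) set \<Rightarrow> (nat \<times> nat) set \<Rightarrow> (nat \<times> nat) set \<Rightarrow> 'k lform \<Rightarrow> 'k lform \<Rightarrow> bool" where
  "is_line_of A B C U3 U2 U1 F G \<longleftrightarrow>
     fst F \<noteq> fst G \<and> lin F G \<in> lines_of A B C U3 U2 U1"

text \<open>Hyp_6(star)-property; indices of H_1..H_6 are 0..5 taken modulo 6.\<close>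
definition hyp6_star ::
  "(nat \<Rightarrow> 'k::field \<times> 'k) \<Rightarrow> (nat \<Rightarrow> 'k \<times> 'k) \<Rightarrow> (nat \<Rightarrow> 'k \<times> 'k)
   \<Rightarrow> (nat \<times> nat) set \<Rightarrow> (nat \<times> nat) set \<Rightarrow> (nat \<times> nat) set \<Rightarrow> bool" where
  "hyp6_star A B C U3 U2 U1 \<longleftrightarrow>
     (\<forall>H :: nat \<Rightarrow> 'k lform.
        (\<forall>i<6. is_lform (H i)) \<and>
        (\<forall>i<6. \<forall>j<6. j \<noteq> i \<and> j \<noteq> (i + 1) mod 6 \<and> j \<noteq> (i + 5) mod 6 \<longrightarrow>
            is_line_of A B C U3 U2 U1 (H i) (H j))
        \<longrightarrow> (\<exists>u<6. is_line_of A B C U3 U2 U1 (H u) (H ((u + 1) mod 6))))"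

definition resembles_ferrers :: "(nat \<times> nat) set \<Rightarrow> nat \<Rightarrow> nat \<Rightarrow> bool" where
  "resembles_ferrers U m n \<longleftrightarrow>
     (\<exists>\<sigma> \<tau>. bij_betw \<sigma> {1..m} {1..m} \<and> bij_betw \<tau> {1..n} {1..n} \<and>
        (let V = (\<lambda>(u,v). (\<sigma> u, \<tau> v)) ` U in
          \<forall>(u,v)\<in>V. \<forall>u'\<in>{1..u}. \<forall>v'\<in>{1..v}. (u',v') \<in> V))"

definition mu :: "(nat \<times> nat) set \<Rightarrow> (nat \<times> nat) set \<Rightarrow> (nat \<times> nat) set \<Rightarrow> nat \<Rightarrow> nat \<Rightarrow> nat \<Rightarrow> nat" where
  "mu U3 U2 U1 i j k =
     (if (i,j) \<in> U3 then 1 else 0) + (if (i,k) \<in> U2 then 1 else 0) + (if (j,k) \<in> U1 then 1 else 0)"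

end

(*
  Every hyperplane containing a line L(F,G) is L(F) or L(G). Hence the hyperplanes
  H_1, ..., H_6 of a Hyp_6 configuration are among the L(A_i), L(B_j), L(C_k), and the
  Hyp_6(star)-property is a property of the graph on these hyperplanes whose edges are
  the lines of X: it says that no hexagon in it has all nine diagonals and none of its
  six sides. In such a hexagon opposite vertices and alternate vertices have different
  degrees, so it consists of two hyperplanes of each degree, paired along three sides;
  reading off which of the lines through the two points P_{a_1 b_1 c_1}, P_{a_2 b_2 c_2}
  belong to X gives exactly the two multiplicity matrices of the statement, and
  conversely.
*)

theory Submission
  imports Defs
begin

definition mk_point :: "(nat \<Rightarrow> 'k::field \<times> 'k) \<Rightarrow> 'k pt" where
  "mk_point f = (\<lambda>t. if t \<in> {1,2,3} then f t else (0,0))"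

lemma mk_point_in_points: "(\<And>t. t \<in> {1,2,3} \<Longrightarrow> f t \<noteq> (0,0)) \<Longrightarrow> mk_point f \<in> points"
  unfolding mk_point_def points_def by auto

lemma eval_lform_mk_point:
  "fst F \<in> {1,2,3} \<Longrightarrow> eval_lform F (mk_point f) = fst (snd F) * fst (f (fst F)) + snd (snd F) * snd (f (fst F))"
  by (simp add: eval_lform_def mk_point_def)

definition root_of :: "'k::field \<times> 'k \<Rightarrow> 'k \<times> 'k" where
  "root_of w = (snd w, - fst w)"

definition nonroot_of :: "'k::field \<times> 'k \<Rightarrow> 'k \<times> 'k" where
  "nonroot_of w = (if fst w \<noteq> 0 then (1,0) else (0,1))"

lemma root_of_nonzero: "w \<noteq> (0,0) \<Longrightarrow> root_of w \<noteq> (0,0)"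
  by (cases w) (auto simp: root_of_def)

lemma root_of_root: "fst w * fst (root_of w) + snd w * snd (root_of w) = 0"
  by (simp add: root_of_def mult.commute)

lemma nonroot_of_nonzero: "nonroot_of w \<noteq> (0,0)"
  by (auto simp: nonroot_of_def)

lemma nonroot_of_nonroot: "w \<noteq> (0,0) \<Longrightarrow> fst w * fst (nonroot_of w) + snd w * snd (nonroot_of w) \<noteq> 0"
  by (cases w) (auto simp: nonroot_of_def)

lemma proportional_root_iff:
  fixes a b c d :: "'k::field"
  assumes "(a,b) \<noteq> (0,0)" "(c,d) \<noteq> (0,0)" "c * b = d * a"
  shows "a * x + b * y = 0 \<longleftrightarrow> c * x + d * y = 0"
proof -
  have "a * (c * x + d * y) = c * (a * x + b * y)" "b * (c * x + d * y) = d * (a * x + b * y)"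
    using assms(3) by (simp_all add: algebra_simps)
  then show ?thesis using assms(1,2) by auto
qed

lemma hyp_eq_if_proportional:
  assumes "is_lform F" "is_lform H" "fst H = fst F"
    and "fst (snd H) * snd (snd F) = snd (snd H) * fst (snd F)"
  shows "hyp H = hyp F"
proof -
  have "fst (snd F) * x + snd (snd F) * y = 0 \<longleftrightarrow> fst (snd H) * x + snd (snd H) * y = 0" for x y
    using assms by (intro proportional_root_iff) (auto simp: is_lform_def)
  then show ?thesis using assms(3) unfolding hyp_def eval_lform_def by auto
qed

lemma fst_eq_if_hyp_subset:
  assumes F: "is_lform F" and G: "is_lform G" and sub: "hyp F \<subseteq> hyp G"
  shows "fst F = fst G"
proof (rule ccontr)
  assume ne: "fst F \<noteq> fst G"
  define p where "p = mk_point (\<lambda>t. if t = fst F then root_of (snd F) else if t = fst G then nonroot_of (snd G) else (1,0))"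
  have "p \<in> points" unfolding p_def using F G ne
    by (intro mk_point_in_points) (auto simp: is_lform_def root_of_nonzero nonroot_of_nonzero)
  then have "p \<in> hyp F" "p \<notin> hyp G" using F G ne unfolding hyp_def p_def
    by (auto simp: eval_lform_mk_point is_lform_def root_of_root nonroot_of_nonroot)
  then show False using sub by auto
qed

lemma lin_commute: "lin F G = lin G F"
  unfolding lin_def by auto

lemma hyp_eq_if_lin_subset_same_factor:
  assumes F: "is_lform F" and G: "is_lform G" and H: "is_lform H" and ne: "fst F \<noteq> fst G"
    and sub: "lin F G \<subseteq> hyp H" and eq: "fst H = fst F"
  shows "hyp H = hyp F"
proof -
  define p where "p = mk_point (\<lambda>t. if t = fst F then root_of (snd F) else if t = fst G then root_of (snd G) else (1,0))"
  have "p \<in> points" unfolding p_def using F G ne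
    by (intro mk_point_in_points) (auto simp: is_lform_def root_of_nonzero)
  then have "p \<in> lin F G" using F G ne unfolding lin_def hyp_def p_def
    by (auto simp: eval_lform_mk_point is_lform_def root_of_root)
  with sub have "eval_lform H p = 0" unfolding hyp_def by auto
  then have "fst (snd H) * snd (snd F) = snd (snd H) * fst (snd F)"
    using H eq unfolding p_def by (simp add: eval_lform_mk_point is_lform_def root_of_def algebra_simps)
  then show ?thesis using hyp_eq_if_proportional F H eq by blast
qed

lemma hyp_eq_if_lin_subset:
  assumes F: "is_lform F" and G: "is_lform G" and H: "is_lform H" and ne: "fst F \<noteq> fst G"
    and sub: "lin F G \<subseteq> hyp H"
  shows "hyp H = hyp F \<or> hyp H = hyp G"
proof (cases "fst H = fst F \<or> fst H = fst G")
  case True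
  then show ?thesis
    using hyp_eq_if_lin_subset_same_factor[OF F G H ne sub]
      hyp_eq_if_lin_subset_same_factor[OF G F H] ne sub lin_commute[of F G] by auto
next
  case False
  define p where "p = mk_point (\<lambda>t. if t = fst F then root_of (snd F) else if t = fst G then root_of (snd G)
     else if t = fst H then nonroot_of (snd H) else (1,0))"
  have "p \<in> points" unfolding p_def using F G H ne
    by (intro mk_point_in_points) (auto simp: is_lform_def root_of_nonzero nonroot_of_nonzero)
  then have "p \<in> lin F G" "p \<notin> hyp H" using F G H ne False unfolding lin_def hyp_def p_def
    by (auto simp: eval_lform_mk_point is_lform_def root_of_root nonroot_of_nonroot)
  then show ?thesis using sub by auto
qed

lemma lin_eq_lin_cases:
  assumes F: "is_lform F" and G: "is_lform G" and F': "is_lform F'" and G': "is_lform G'"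
    and ne: "fst F \<noteq> fst G" and ne': "fst F' \<noteq> fst G'" and eq: "lin F G = lin F' G'"
  shows "(hyp F' = hyp F \<and> hyp G' = hyp G) \<or> (hyp F' = hyp G \<and> hyp G' = hyp F)"
proof -
  have "hyp F' = hyp F \<or> hyp F' = hyp G" "hyp G' = hyp F \<or> hyp G' = hyp G"
    using hyp_eq_if_lin_subset[OF F G F' ne] hyp_eq_if_lin_subset[OF F G G' ne] eq
    unfolding lin_def by auto
  moreover have "hyp F' \<noteq> hyp G'"
    using fst_eq_if_hyp_subset[OF F' G'] ne' by auto
  ultimately show ?thesis by auto
qed

locale line_variety =
  fixes A B C :: "nat \<Rightarrow> 'k::field \<times> 'k" and d1 d2 d3 :: nat
    and U3 U2 U1 :: "(nat \<times> nat) set"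
  assumes variety: "variety_of_lines A B C d1 d2 d3 U3 U2 U1"
begin

text \<open>The vertex (t, n) stands for the hyperplane L(A_n), L(B_n) or L(C_n) according as t = 1, 2, 3,
  and adj v w says that the corresponding line is one of the lines of X.\<close>

definition vform :: "nat \<times> nat \<Rightarrow> 'k lform" where
  "vform v = (fst v, if fst v = 1 then A (snd v) else if fst v = 2 then B (snd v) else C (snd v))"

definition vertex :: "nat \<times> nat \<Rightarrow> bool" where
  "vertex v \<longleftrightarrow> (fst v = 1 \<and> snd v \<in> {1..d1}) \<or> (fst v = 2 \<and> snd v \<in> {1..d2}) \<or> (fst v = 3 \<and> snd v \<in> {1..d3})"

definition adj :: "nat \<times> nat \<Rightarrow> nat \<times> nat \<Rightarrow> bool" where
  "adj v w \<longleftrightarrow>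
     (fst v = 1 \<and> fst w = 2 \<and> (snd v, snd w) \<in> U3) \<or> (fst v = 2 \<and> fst w = 1 \<and> (snd w, snd v) \<in> U3) \<or>
     (fst v = 1 \<and> fst w = 3 \<and> (snd v, snd w) \<in> U2) \<or> (fst v = 3 \<and> fst w = 1 \<and> (snd w, snd v) \<in> U2) \<or>
     (fst v = 2 \<and> fst w = 3 \<and> (snd v, snd w) \<in> U1) \<or> (fst v = 3 \<and> fst w = 2 \<and> (snd w, snd v) \<in> U1)"

lemma fst_vform [simp]: "fst (vform v) = fst v"
  by (simp add: vform_def)

lemma adj_sym: "adj v w \<Longrightarrow> adj w v"
  unfolding adj_def by auto

lemma adj_fst_neq: "adj v w \<Longrightarrow> fst v \<noteq> fst w"
  unfolding adj_def by auto

lemma adj_fst_range: "adj v w \<Longrightarrow> fst v \<in> {1,2,3}"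
  unfolding adj_def by auto

lemma adj_vertex: "adj v w \<Longrightarrow> vertex v \<and> vertex w"
  using variety unfolding adj_def vertex_def variety_of_lines_def by blast

lemma is_lform_vform: "vertex v \<Longrightarrow> is_lform (vform v)"
  using variety unfolding vertex_def vform_def is_lform_def variety_of_lines_def by auto

lemma lines_of_eq: "lines_of A B C U3 U2 U1 = {lin (vform v) (vform w) | v w. adj v w}"
proof (intro antisym subsetI)
  fix L assume "L \<in> lines_of A B C U3 U2 U1"
  then consider (AB) i j where "(i, j) \<in> U3" "L = lin (formA A i) (formB B j)"
    | (AC) i k where "(i, k) \<in> U2" "L = lin (formA A i) (formC C k)"
    | (BC) j k where "(j, k) \<in> U1" "L = lin (formB B j) (formC C k)"
    unfolding lines_of_def by auto
  then show "L \<in> {lin (vform v) (vform w) | v w. adj v w}"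
  proof cases
    case AB then show ?thesis
      by (intro CollectI exI[of _ "(1, i)"] exI[of _ "(2, j)"]) (simp add: adj_def vform_def formA_def formB_def formC_def)
  next
    case AC then show ?thesis
      by (intro CollectI exI[of _ "(1, i)"] exI[of _ "(3, k)"]) (simp add: adj_def vform_def formA_def formB_def formC_def)
  next
    case BC then show ?thesis
      by (intro CollectI exI[of _ "(2, j)"] exI[of _ "(3, k)"]) (simp add: adj_def vform_def formA_def formB_def formC_def)
  qed
next
  fix L assume "L \<in> {lin (vform v) (vform w) | v w. adj v w}"
  then obtain t n t' n' where "adj (t, n) (t', n')" "L = lin (vform (t, n)) (vform (t', n'))"
    by auto
  then show "L \<in> lines_of A B C U3 U2 U1"
    unfolding lines_of_def adj_def by (auto simp: lin_commute vform_def formA_def formB_def formC_def)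
qed

lemma lin_vform_in_lines_of: "adj v w \<Longrightarrow> lin (vform v) (vform w) \<in> lines_of A B C U3 U2 U1"
  unfolding lines_of_eq by blast

lemma vertex_eq_if_hyp_eq:
  assumes v: "vertex v" and w: "vertex w" and eq: "hyp (vform v) = hyp (vform w)"
  shows "v = w"
proof -
  have "fst v = fst w"
    using fst_eq_if_hyp_subset[OF is_lform_vform[OF v] is_lform_vform[OF w]] eq by simp
  then obtain t n n' where vw: "v = (t, n)" "w = (t, n')"
    by (metis prod.collapse)
  have inj: "inj_on (\<lambda>n. hyp (vform (1, n))) {1..d1}" "inj_on (\<lambda>n. hyp (vform (2, n))) {1..d2}"
    "inj_on (\<lambda>n. hyp (vform (3, n))) {1..d3}"
    using variety unfolding variety_of_lines_def vform_def formA_def formB_def formC_def by auto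
  from v w consider "t = 1" "n \<in> {1..d1}" "n' \<in> {1..d1}" | "t = 2" "n \<in> {1..d2}" "n' \<in> {1..d2}"
    | "t = 3" "n \<in> {1..d3}" "n' \<in> {1..d3}"
    unfolding vw vertex_def by auto
  then show "v = w"
    using inj eq unfolding vw by cases (metis inj_onD)+
qed

lemma is_line_of_iff:
  assumes F: "is_lform F" and G: "is_lform G"
  shows "is_line_of A B C U3 U2 U1 F G \<longleftrightarrow>
    (\<exists>v w. adj v w \<and> hyp F = hyp (vform v) \<and> hyp G = hyp (vform w))"
proof
  assume "is_line_of A B C U3 U2 U1 F G"
  then obtain v w where ne: "fst F \<noteq> fst G" and vw: "adj v w" and eq: "lin F G = lin (vform v) (vform w)"
    unfolding is_line_of_def lines_of_eq by auto
  have "vertex v" "vertex w" using adj_vertex[OF vw] by auto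
  then have "(hyp F = hyp (vform v) \<and> hyp G = hyp (vform w)) \<or> (hyp F = hyp (vform w) \<and> hyp G = hyp (vform v))"
    using lin_eq_lin_cases[OF is_lform_vform is_lform_vform F G _ ne] eq adj_fst_neq[OF vw] by auto
  then show "\<exists>v w. adj v w \<and> hyp F = hyp (vform v) \<and> hyp G = hyp (vform w)"
    using vw adj_sym by blast
next
  assume "\<exists>v w. adj v w \<and> hyp F = hyp (vform v) \<and> hyp G = hyp (vform w)"
  then obtain v w where vw: "adj v w" and eq: "hyp F = hyp (vform v)" "hyp G = hyp (vform w)" by blast
  have "vertex v" "vertex w" using adj_vertex[OF vw] by auto
  then have "fst F = fst v" "fst G = fst w"
    using fst_eq_if_hyp_subset[OF F is_lform_vform] fst_eq_if_hyp_subset[OF G is_lform_vform] eq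
    by (metis fst_vform order_refl)+
  moreover have "lin F G = lin (vform v) (vform w)"
    using eq by (simp add: lin_def)
  ultimately show "is_line_of A B C U3 U2 U1 F G"
    using vw adj_fst_neq[OF vw] lin_vform_in_lines_of unfolding is_line_of_def by simp
qed

lemma is_line_of_vertex:
  assumes "is_lform F" "is_lform G" "is_line_of A B C U3 U2 U1 F G"
  obtains v where "vertex v" "hyp F = hyp (vform v)"
  using is_line_of_iff[OF assms(1,2)] assms(3) adj_vertex by blast

lemma is_line_of_iff_adj:
  assumes "is_lform F" "is_lform G" "vertex v" "vertex w"
    and "hyp F = hyp (vform v)" "hyp G = hyp (vform w)"
  shows "is_line_of A B C U3 U2 U1 F G \<longleftrightarrow> adj v w"
  using is_line_of_iff[OF assms(1,2)] assms(3-) vertex_eq_if_hyp_eq adj_vertex by metis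

end

definition hexagon :: "('a \<Rightarrow> 'a \<Rightarrow> bool) \<Rightarrow> 'a \<Rightarrow> 'a \<Rightarrow> 'a \<Rightarrow> 'a \<Rightarrow> 'a \<Rightarrow> 'a \<Rightarrow> bool" where
  "hexagon R x0 x1 x2 x3 x4 x5 \<longleftrightarrow>
     R x0 x2 \<and> R x0 x3 \<and> R x0 x4 \<and> R x1 x3 \<and> R x1 x4 \<and> R x1 x5 \<and> R x2 x4 \<and> R x2 x5 \<and> R x3 x5 \<and>
     \<not> R x0 x1 \<and> \<not> R x1 x2 \<and> \<not> R x2 x3 \<and> \<not> R x3 x4 \<and> \<not> R x4 x5 \<and> \<not> R x5 x0"

lemma all_less_six: "(\<forall>i<6::nat. P i) \<longleftrightarrow> P 0 \<and> P 1 \<and> P 2 \<and> P 3 \<and> P 4 \<and> P 5"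
proof
  assume "P 0 \<and> P 1 \<and> P 2 \<and> P 3 \<and> P 4 \<and> P 5"
  moreover have "i < 6 \<Longrightarrow> i = 0 \<or> i = 1 \<or> i = 2 \<or> i = 3 \<or> i = 4 \<or> i = 5" for i :: nat
    by auto
  ultimately show "\<forall>i<6. P i" by auto
qed simp

lemma not_less_six_ex: "(\<not> (\<exists>i<6::nat. P i)) \<longleftrightarrow> (\<forall>i<6. \<not> P i)"
  by blast

lemma hexagon_fun_iff:
  fixes H :: "nat \<Rightarrow> 'a"
  assumes "symp R"
  shows "((\<forall>i<6. \<forall>j<6. j \<noteq> i \<and> j \<noteq> (i + 1) mod 6 \<and> j \<noteq> (i + 5) mod 6 \<longrightarrow> R (H i) (H j)) \<and>
          \<not> (\<exists>u<6. R (H u) (H ((u + 1) mod 6))))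
     \<longleftrightarrow> hexagon R (H 0) (H 1) (H 2) (H 3) (H 4) (H 5)"
proof -
  have "R x y \<longleftrightarrow> R y x" for x y
    using assms by (blast dest: sympD)
  then show ?thesis
    unfolding hexagon_def not_less_six_ex all_less_six by (auto simp: numeral_2_eq_2 [symmetric])
qed

lemma hexagon_cong:
  fixes x y :: "nat \<Rightarrow> _"
  assumes "\<And>i j. i < 6 \<Longrightarrow> j < 6 \<Longrightarrow> R (x i) (x j) \<longleftrightarrow> S (y i) (y j)"
  shows "hexagon R (x 0) (x 1) (x 2) (x 3) (x 4) (x 5) \<longleftrightarrow> hexagon S (y 0) (y 1) (y 2) (y 3) (y 4) (y 5)"
  unfolding hexagon_def using assms by simp

lemma hexagon_opposite:
  fixes x :: "nat \<Rightarrow> _"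
  assumes "hexagon R (x 0) (x 1) (x 2) (x 3) (x 4) (x 5)" "i < 6"
  shows "R (x i) (x ((i + 3) mod 6)) \<or> R (x ((i + 3) mod 6)) (x i)"
proof -
  have "\<forall>i<6. R (x i) (x ((i + 3) mod 6)) \<or> R (x ((i + 3) mod 6)) (x i)"
    using assms(1) unfolding hexagon_def all_less_six by simp
  then show ?thesis using assms(2) by blast
qed

lemma hexagon_factor_patterns:
  fixes t0 t1 t2 t3 t4 t5 :: nat
  assumes "t0 \<in> {1,2,3}" "t1 \<in> {1,2,3}" "t2 \<in> {1,2,3}" "t3 \<in> {1,2,3}" "t4 \<in> {1,2,3}" "t5 \<in> {1,2,3}"
    and "t0 \<noteq> t2" "t0 \<noteq> t3" "t0 \<noteq> t4" "t1 \<noteq> t3" "t1 \<noteq> t4" "t1 \<noteq> t5" "t2 \<noteq> t4" "t2 \<noteq> t5" "t3 \<noteq> t5"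
  shows "(t0 = 1 \<and> t1 = 1 \<and> t2 = 2 \<and> t3 = 2 \<and> t4 = 3 \<and> t5 = 3) \<or>
    (t0 = 1 \<and> t1 = 1 \<and> t2 = 3 \<and> t3 = 3 \<and> t4 = 2 \<and> t5 = 2) \<or>
    (t0 = 2 \<and> t1 = 2 \<and> t2 = 1 \<and> t3 = 1 \<and> t4 = 3 \<and> t5 = 3) \<or>
    (t0 = 2 \<and> t1 = 2 \<and> t2 = 3 \<and> t3 = 3 \<and> t4 = 1 \<and> t5 = 1) \<or>
    (t0 = 3 \<and> t1 = 3 \<and> t2 = 1 \<and> t3 = 1 \<and> t4 = 2 \<and> t5 = 2) \<or>
    (t0 = 3 \<and> t1 = 3 \<and> t2 = 2 \<and> t3 = 2 \<and> t4 = 1 \<and> t5 = 1) \<or>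
    (t0 = 1 \<and> t1 = 2 \<and> t2 = 2 \<and> t3 = 3 \<and> t4 = 3 \<and> t5 = 1) \<or>
    (t0 = 1 \<and> t1 = 3 \<and> t2 = 3 \<and> t3 = 2 \<and> t4 = 2 \<and> t5 = 1) \<or>
    (t0 = 2 \<and> t1 = 1 \<and> t2 = 1 \<and> t3 = 3 \<and> t4 = 3 \<and> t5 = 2) \<or>
    (t0 = 2 \<and> t1 = 3 \<and> t2 = 3 \<and> t3 = 1 \<and> t4 = 1 \<and> t5 = 2) \<or>
    (t0 = 3 \<and> t1 = 1 \<and> t2 = 1 \<and> t3 = 2 \<and> t4 = 2 \<and> t5 = 3) \<or>
    (t0 = 3 \<and> t1 = 2 \<and> t2 = 2 \<and> t3 = 1 \<and> t4 = 1 \<and> t5 = 3)"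
  using assms by (elim insertE emptyE) simp_all

lemma symp_is_line_of: "symp (is_line_of A B C U3 U2 U1)"
  unfolding symp_def is_line_of_def using lin_commute by metis

lemma hyp6_star_iff_no_hexagon:
  "hyp6_star A B C U3 U2 U1 \<longleftrightarrow>
    \<not> (\<exists>H :: nat \<Rightarrow> _. (\<forall>i<6. is_lform (H i)) \<and>
        hexagon (is_line_of A B C U3 U2 U1) (H 0) (H 1) (H 2) (H 3) (H 4) (H 5))"
  unfolding hyp6_star_def hexagon_fun_iff[OF symp_is_line_of, symmetric] by blast

definition forbidden_config ::
  "(nat \<times> nat) set \<Rightarrow> (nat \<times> nat) set \<Rightarrow> (nat \<times> nat) set \<Rightarrow> nat \<Rightarrow> nat \<Rightarrow> nat \<Rightarrow> nat \<Rightarrow> nat \<Rightarrow> nat \<Rightarrow> bool" where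
  "forbidden_config U3 U2 U1 a1 a2 b1 b2 c1 c2 \<longleftrightarrow>
     mu U3 U2 U1 a1 b1 c1 = 3 \<and> mu U3 U2 U1 a1 b2 c1 = 2 \<and> mu U3 U2 U1 a2 b1 c1 = 2 \<and> mu U3 U2 U1 a2 b2 c1 = 2 \<and>
     mu U3 U2 U1 a1 b1 c2 = 2 \<and> mu U3 U2 U1 a1 b2 c2 = 2 \<and> mu U3 U2 U1 a2 b1 c2 = 2 \<and> mu U3 U2 U1 a2 b2 c2 = 3"

lemma forbidden_config_iff:
  "forbidden_config U3 U2 U1 a1 a2 b1 b2 c1 c2 \<longleftrightarrow>
     (a1, b1) \<in> U3 \<and> (a1, c1) \<in> U2 \<and> (b1, c1) \<in> U1 \<and>
     (a2, b2) \<in> U3 \<and> (a2, c2) \<in> U2 \<and> (b2, c2) \<in> U1 \<and>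
     ((a1, b2) \<in> U3 \<and> (a2, c1) \<in> U2 \<and> (b1, c2) \<in> U1 \<and> (a2, b1) \<notin> U3 \<and> (b2, c1) \<notin> U1 \<and> (a1, c2) \<notin> U2 \<or>
      (a1, b2) \<notin> U3 \<and> (a2, c1) \<notin> U2 \<and> (b1, c2) \<notin> U1 \<and> (a2, b1) \<in> U3 \<and> (b2, c1) \<in> U1 \<and> (a1, c2) \<in> U2)"
  unfolding forbidden_config_def mu_def by auto

context line_variety begin

lemma hexagon_lines_iff_hexagon_adj:
  "(\<exists>H :: nat \<Rightarrow> 'k lform. (\<forall>i<6. is_lform (H i)) \<and>
      hexagon (is_line_of A B C U3 U2 U1) (H 0) (H 1) (H 2) (H 3) (H 4) (H 5))
   \<longleftrightarrow> (\<exists>v :: nat \<Rightarrow> nat \<times> nat. hexagon adj (v 0) (v 1) (v 2) (v 3) (v 4) (v 5))"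
proof
  assume "\<exists>H :: nat \<Rightarrow> 'k lform. (\<forall>i<6. is_lform (H i)) \<and>
      hexagon (is_line_of A B C U3 U2 U1) (H 0) (H 1) (H 2) (H 3) (H 4) (H 5)"
  then obtain H :: "nat \<Rightarrow> 'k lform" where H: "\<forall>i<6. is_lform (H i)"
    and hex: "hexagon (is_line_of A B C U3 U2 U1) (H 0) (H 1) (H 2) (H 3) (H 4) (H 5)"
    by blast
  have "\<exists>w. vertex w \<and> hyp (H i) = hyp (vform w)" if "i < 6" for i
  proof -
    have "is_line_of A B C U3 U2 U1 (H i) (H ((i + 3) mod 6))"
      using hexagon_opposite[OF hex that] symp_is_line_of by (blast dest: sympD)
    then show ?thesis
      using is_line_of_vertex H that by (metis mod_less_divisor zero_less_numeral)
  qed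
  then obtain v where v: "\<And>i. i < 6 \<Longrightarrow> vertex (v i) \<and> hyp (H i) = hyp (vform (v i))"
    by metis
  have "hexagon adj (v 0) (v 1) (v 2) (v 3) (v 4) (v 5)"
    using hex hexagon_cong[of "is_line_of A B C U3 U2 U1" H adj v] is_line_of_iff_adj H v by simp
  then show "\<exists>v :: nat \<Rightarrow> nat \<times> nat. hexagon adj (v 0) (v 1) (v 2) (v 3) (v 4) (v 5)" by blast
next
  assume "\<exists>v :: nat \<Rightarrow> nat \<times> nat. hexagon adj (v 0) (v 1) (v 2) (v 3) (v 4) (v 5)"
  then obtain v :: "nat \<Rightarrow> nat \<times> nat" where hex: "hexagon adj (v 0) (v 1) (v 2) (v 3) (v 4) (v 5)"
    by blast
  have v: "vertex (v i)" if "i < 6" for i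
    using hexagon_opposite[OF hex that] adj_vertex by blast
  have "hexagon (is_line_of A B C U3 U2 U1) (vform (v 0)) (vform (v 1)) (vform (v 2)) (vform (v 3)) (vform (v 4)) (vform (v 5))"
    using hex hexagon_cong[of "is_line_of A B C U3 U2 U1" "vform \<circ> v" adj v] is_line_of_iff_adj is_lform_vform v
    by simp
  moreover have "\<forall>i<6. is_lform (vform (v i))"
    using is_lform_vform v by blast
  ultimately show "\<exists>H :: nat \<Rightarrow> 'k lform. (\<forall>i<6. is_lform (H i)) \<and>
      hexagon (is_line_of A B C U3 U2 U1) (H 0) (H 1) (H 2) (H 3) (H 4) (H 5)"
    by (intro exI[of _ "vform \<circ> v"]) simp
qed

lemma hexagon_adj_forbidden_config:
  fixes v :: "nat \<Rightarrow> nat \<times> nat"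
  assumes hex: "hexagon adj (v 0) (v 1) (v 2) (v 3) (v 4) (v 5)"
  shows "\<exists>a1 a2 b1 b2 c1 c2. forbidden_config U3 U2 U1 a1 a2 b1 b2 c1 c2"
proof -
  define t n where "t = fst \<circ> v" and "n = snd \<circ> v"
  have v: "v i = (t i, n i)" for i
    by (simp add: t_def n_def)
  have "\<forall>i<6. t i \<in> {1,2,3}"
    using hexagon_opposite[OF hex] adj_fst_range adj_sym unfolding t_def by (metis comp_apply)
  then have range: "t 0 \<in> {1,2,3}" "t 1 \<in> {1,2,3}" "t 2 \<in> {1,2,3}" "t 3 \<in> {1,2,3}"
    "t 4 \<in> {1,2,3}" "t 5 \<in> {1,2,3}"
    unfolding all_less_six by simp_all
  have neq: "t 0 \<noteq> t 2" "t 0 \<noteq> t 3" "t 0 \<noteq> t 4" "t 1 \<noteq> t 3" "t 1 \<noteq> t 4" "t 1 \<noteq> t 5"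
    "t 2 \<noteq> t 4" "t 2 \<noteq> t 5" "t 3 \<noteq> t 5"
    using hex adj_fst_neq unfolding hexagon_def t_def by auto
  have "forbidden_config U3 U2 U1 (n 0) (n 1) (n 2) (n 3) (n 4) (n 5) \<or>
    forbidden_config U3 U2 U1 (n 0) (n 1) (n 4) (n 5) (n 2) (n 3) \<or>
    forbidden_config U3 U2 U1 (n 2) (n 3) (n 0) (n 1) (n 4) (n 5) \<or>
    forbidden_config U3 U2 U1 (n 4) (n 5) (n 0) (n 1) (n 2) (n 3) \<or>
    forbidden_config U3 U2 U1 (n 2) (n 3) (n 4) (n 5) (n 0) (n 1) \<or>
    forbidden_config U3 U2 U1 (n 4) (n 5) (n 2) (n 3) (n 0) (n 1) \<or>
    forbidden_config U3 U2 U1 (n 0) (n 5) (n 2) (n 1) (n 4) (n 3) \<or>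
    forbidden_config U3 U2 U1 (n 0) (n 5) (n 4) (n 3) (n 2) (n 1) \<or>
    forbidden_config U3 U2 U1 (n 2) (n 1) (n 0) (n 5) (n 4) (n 3) \<or>
    forbidden_config U3 U2 U1 (n 4) (n 3) (n 0) (n 5) (n 2) (n 1) \<or>
    forbidden_config U3 U2 U1 (n 2) (n 1) (n 4) (n 3) (n 0) (n 5) \<or>
    forbidden_config U3 U2 U1 (n 4) (n 3) (n 2) (n 1) (n 0) (n 5)"
    \<comment> \<open>one disjunct for each degree pattern of hexagon_factor_patterns, in the same order\<close>
    using hexagon_factor_patterns[OF range neq] hex unfolding hexagon_def v
    by (elim disjE) (simp_all add: adj_def forbidden_config_iff)
  then show ?thesis by blast
qed

lemma forbidden_config_hexagon_adj:
  assumes "forbidden_config U3 U2 U1 a1 a2 b1 b2 c1 c2"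
  shows "\<exists>v :: nat \<Rightarrow> nat \<times> nat. hexagon adj (v 0) (v 1) (v 2) (v 3) (v 4) (v 5)"
proof -
  have "hexagon adj (1, a1) (1, a2) (2, b1) (2, b2) (3, c1) (3, c2) \<or>
        hexagon adj (1, a1) (1, a2) (3, c1) (3, c2) (2, b1) (2, b2)"
    using assms unfolding forbidden_config_iff
    by (elim conjE disjE) (simp_all add: hexagon_def adj_def)
  then show ?thesis
  proof
    assume "hexagon adj (1, a1) (1, a2) (2, b1) (2, b2) (3, c1) (3, c2)"
    then show ?thesis by (intro exI[of _ "(!) [(1, a1), (1, a2), (2, b1), (2, b2), (3, c1), (3, c2)]"]) simp
  next
    assume "hexagon adj (1, a1) (1, a2) (3, c1) (3, c2) (2, b1) (2, b2)"
    then show ?thesis by (intro exI[of _ "(!) [(1, a1), (1, a2), (3, c1), (3, c2), (2, b1), (2, b2)]"]) simp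
  qed
qed

lemma hyp6_star_iff_no_forbidden_config:
  "hyp6_star A B C U3 U2 U1 \<longleftrightarrow> \<not> (\<exists>a1 a2 b1 b2 c1 c2. forbidden_config U3 U2 U1 a1 a2 b1 b2 c1 c2)"
  unfolding hyp6_star_iff_no_hexagon hexagon_lines_iff_hexagon_adj
  using hexagon_adj_forbidden_config forbidden_config_hexagon_adj by blast

end

theorem proposition3p6:
  fixes A B C :: "nat \<Rightarrow> 'k::{alg_closed_field, field_char_0} \<times> 'k"
    and d1 d2 d3 :: nat
    and U3 U2 U1 :: "(nat \<times> nat) set"
  assumes "variety_of_lines A B C d1 d2 d3 U3 U2 U1"
    and "resembles_ferrers U3 d1 d2"
    and "resembles_ferrers U2 d1 d3"
    and "resembles_ferrers U1 d2 d3"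
  shows "hyp6_star A B C U3 U2 U1 \<longleftrightarrow>
    (\<forall>a1\<in>{1..d1}. \<forall>a2\<in>{1..d1}. \<forall>b1\<in>{1..d2}. \<forall>b2\<in>{1..d2}. \<forall>c1\<in>{1..d3}. \<forall>c2\<in>{1..d3}.
       \<not> (mu U3 U2 U1 a1 b1 c1 = 3 \<and> mu U3 U2 U1 a1 b2 c1 = 2 \<and>
          mu U3 U2 U1 a2 b1 c1 = 2 \<and> mu U3 U2 U1 a2 b2 c1 = 2)
     \<or> \<not> (mu U3 U2 U1 a1 b1 c2 = 2 \<and> mu U3 U2 U1 a1 b2 c2 = 2 \<and>
          mu U3 U2 U1 a2 b1 c2 = 2 \<and> mu U3 U2 U1 a2 b2 c2 = 3))"
proof -
  interpret line_variety A B C d1 d2 d3 U3 U2 U1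
    using assms(1) by unfold_locales
  have "a1 \<in> {1..d1} \<and> a2 \<in> {1..d1} \<and> b1 \<in> {1..d2} \<and> b2 \<in> {1..d2} \<and> c1 \<in> {1..d3} \<and> c2 \<in> {1..d3}"
    if "forbidden_config U3 U2 U1 a1 a2 b1 b2 c1 c2" for a1 a2 b1 b2 c1 c2
    using that assms(1) unfolding variety_of_lines_def forbidden_config_iff by blast
  then show ?thesis
    unfolding hyp6_star_iff_no_forbidden_config forbidden_config_def by blast
qed

end
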